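(* Let $\Phi$ be a non-trivial root system generating a euclidean vector space $E$, let $W$ be its Weyl group, and let $S\subset E$ be a $W$-orbit satisfying: (a) $S$ generates $E$ as a vector space; (b) there are no distinct $\lambda_1,\dots,\lambda_4\in S$ with $\lambda_1+\lambda_2=\lambda_3+\lambda_4$. Then $\Phi$ is simple of type $A_\ell$ for some $\ell\ge1$. Moreover, if $\Phi=\{\pm(e_i-e_j)\mid 0\le i<j\le\ell\}\subset E=\mathbb{R}^{\ell+1}/\mathrm{diag}(\mathbb{R})$ (with $e_i$ the images of the standard basis vectors), and if either $\ell\ne2$ or additionally (c) there are no distinct $\lambda_1,\dots,\lambda_6\in S$ with $\lambda_1+\lambda_2+\lambda_3=\lambda_4+\lambda_5+\lambda_6$, then $S=\{ce_i\mid 0\le i\le\ell\}$ for some constant $c\ne0$. *)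

theory Defs
  imports "HOL-Analysis.Analysis"
begin

definition refl_vec :: "'a::real_inner \<Rightarrow> 'a \<Rightarrow> 'a" where
  "refl_vec \<alpha> v = v - (2 * (v \<bullet> \<alpha>) / (\<alpha> \<bullet> \<alpha>)) *\<^sub>R \<alpha>"

definition root_system :: "'a::euclidean_space set \<Rightarrow> bool" where
  "root_system \<Phi> \<longleftrightarrow>
     finite \<Phi> \<and> 0 \<notin> \<Phi> \<and> span \<Phi> = UNIV \<and>
     (\<forall>\<alpha>\<in>\<Phi>. \<forall>c::real. c *\<^sub>R \<alpha> \<in> \<Phi> \<longrightarrow> c = 1 \<or> c = -1) \<and>
     (\<forall>\<alpha>\<in>\<Phi>. refl_vec \<alpha> ` \<Phi> \<subseteq> \<Phi>) \<and>
     (\<forall>\<alpha>\<in>\<Phi>. \<forall>\<beta>\<in>\<Phi>. 2 * (\<beta> \<bullet> \<alpha>) / (\<alpha> \<bullet> \<alpha>) \<in> \<int>)"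

text \<open>Weyl group: the group generated by the reflections s_alpha, alpha in Phi
  (reflections are involutions, so the monoid they generate is the group).\<close>
inductive_set weyl_group :: "'a::real_inner set \<Rightarrow> ('a \<Rightarrow> 'a) set" for \<Phi> where
  weyl_id: "id \<in> weyl_group \<Phi>"
| weyl_step: "w \<in> weyl_group \<Phi> \<Longrightarrow> \<alpha> \<in> \<Phi> \<Longrightarrow> refl_vec \<alpha> \<circ> w \<in> weyl_group \<Phi>"

definition weyl_orbit :: "'a::real_inner set \<Rightarrow> 'a set \<Rightarrow> bool" where
  "weyl_orbit \<Phi> S \<longleftrightarrow> (\<exists>x. S = (\<lambda>w. w x) ` weyl_group \<Phi>)"

text \<open>The standard root system of type A_l inside R^(l+1)/diag(R), transported
  along a linear isomorphism: e 0, ..., e l are the images in E of the standard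
  basis vectors under a linear surjection R^(l+1) \<rightarrow> E whose kernel is diag(R).\<close>
definition quotient_basis :: "nat \<Rightarrow> (nat \<Rightarrow> 'a::real_vector) \<Rightarrow> bool" where
  "quotient_basis l e \<longleftrightarrow>
     span (e ` {0..l}) = UNIV \<and>
     (\<forall>c::nat \<Rightarrow> real. (\<Sum>i\<le>l. c i *\<^sub>R e i) = 0 \<longleftrightarrow> (\<forall>i\<le>l. c i = c 0))"

definition A_roots :: "nat \<Rightarrow> (nat \<Rightarrow> 'a::real_vector) \<Rightarrow> 'a set" where
  "A_roots l e = {e i - e j | i j. i \<le> l \<and> j \<le> l \<and> i \<noteq> j}"

definition type_A :: "nat \<Rightarrow> 'a::real_vector set \<Rightarrow> bool" where
  "type_A l \<Phi> \<longleftrightarrow> (\<exists>e. quotient_basis l e \<and> \<Phi> = A_roots l e)"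

text \<open>E is isometrically identified with R^(l+1)/diag(R) (quotient inner product),
  e i being the image of the i-th standard basis vector.\<close>
definition isometric_quotient_basis :: "nat \<Rightarrow> (nat \<Rightarrow> 'a::real_inner) \<Rightarrow> bool" where
  "isometric_quotient_basis l e \<longleftrightarrow>
     quotient_basis l e \<and>
     (\<forall>i\<le>l. \<forall>j\<le>l. e i \<bullet> e j = (if i = j then 1 else 0) - 1 / (real l + 1))"

end

theory Submission
  imports Defs
begin

text \<open>
  Fix a point \<open>x\<close> of the spanning orbit \<open>S\<close>. The key fact
  (\<open>orbit_root_pair_angle\<close>) is that two non-proportional roots, both non-orthogonal
  to a point of \<open>S\<close>, have equal length and meet at \<open>60\<degree>\<close> or \<open>120\<degree>\<close>: otherwise
  a suitable power of the rotation \<open>s\<^sub>\<alpha>s\<^sub>\<beta>\<close> negates both roots and produces a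
  four-term relation \<open>\<mu> + r\<mu> = s\<^sub>\<alpha>\<mu> + r(s\<^sub>\<alpha>\<mu>)\<close> in \<open>S\<close>.

  First claim: the roots positive on \<open>x\<close> either form a star (an equiangular set
  at \<open>60\<degree>\<close>) or contain two roots \<open>\<alpha>, \<beta>\<close> at \<open>120\<degree>\<close>, in which case \<open>{\<alpha>, \<alpha>+\<beta>}\<close>
  is a star. The root set \<open>\<pm>\<Psi> \<union> (\<Psi> - \<Psi>)\<close> of a star \<open>\<Psi>\<close> is stable under the
  reflections in \<open>\<Psi>\<close> and is a root system of type \<open>A\<^bsub>|\<Psi>|\<^esub>\<close>; roots orthogonal to
  the star would be orthogonal to the whole (spanning) orbit, so \<open>\<Phi>\<close> is this set.

  Second claim: in the standard model write \<open>x = \<Sum>\<xi>\<^sub>ie\<^sub>i\<close>. Orthogonal roots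
  \<open>e\<^sub>a - e\<^sub>b\<close>, \<open>e\<^sub>c - e\<^sub>d\<close> cannot both be non-orthogonal to \<open>x\<close>, so \<open>\<xi>\<close> is constant
  away from one index \<open>k\<close> (then \<open>x = c e\<^sub>k\<close>, whose orbit is \<open>{c e\<^sub>i}\<close>), or \<open>\<ell> = 2\<close>
  with three distinct coordinates, which yields a six-term relation.
\<close>

section \<open>Reflections and root systems\<close>

lemma refl_vec_self: "a \<noteq> 0 \<Longrightarrow> refl_vec a a = - a"
  by (simp add: refl_vec_def scaleR_2)

lemma linear_refl_vec: "linear (refl_vec a)"
  unfolding refl_vec_def
  by (intro linearI) (auto simp: algebra_simps add_divide_distrib)

lemma refl_vec_inner: "a \<noteq> 0 \<Longrightarrow> refl_vec a u \<bullet> refl_vec a v = u \<bullet> v"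
  unfolding refl_vec_def
  by (simp add: inner_diff_right inner_commute field_simps power2_eq_square)

lemma refl_vec_invol: "a \<noteq> 0 \<Longrightarrow> refl_vec a (refl_vec a v) = v"
  unfolding refl_vec_def by (simp add: algebra_simps)

lemma inner_refl_vec_right:
  "x \<bullet> refl_vec d g = x \<bullet> g - (2 * (g \<bullet> d) / (d \<bullet> d)) * (x \<bullet> d)"
  by (simp add: refl_vec_def inner_diff_right)

lemma refl_vec_pair_coords:
  assumes "a \<noteq> 0" "b \<noteq> 0"
  defines "p \<equiv> 2 * (a \<bullet> b) / (b \<bullet> b)" and "q \<equiv> 2 * (b \<bullet> a) / (a \<bullet> a)"
  shows "refl_vec a (refl_vec b (x *\<^sub>R a + y *\<^sub>R b)) =
           ((p * q - 1) * x + q * y) *\<^sub>R a + (- p * x - y) *\<^sub>R b"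
proof -
  define z where "z = - y - p * x"
  have cb: "2 * ((x *\<^sub>R a + y *\<^sub>R b) \<bullet> b) / (b \<bullet> b) = 2 * y + p * x"
    using assms by (simp add: inner_add_left field_simps)
  have b_part: "refl_vec b (x *\<^sub>R a + y *\<^sub>R b) = x *\<^sub>R a + z *\<^sub>R b"
    unfolding refl_vec_def cb z_def by (simp add: algebra_simps flip: scaleR_left_distrib)
  have ca: "2 * ((x *\<^sub>R a + z *\<^sub>R b) \<bullet> a) / (a \<bullet> a) = 2 * x + q * z"
    using assms(1) unfolding q_def by (simp add: inner_add_left field_simps)
  have a_part: "refl_vec a (x *\<^sub>R a + z *\<^sub>R b) = (- x - q * z) *\<^sub>R a + z *\<^sub>R b"
    unfolding refl_vec_def ca by (simp add: algebra_simps flip: scaleR_left_distrib)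
  show ?thesis unfolding b_part a_part unfolding z_def by (simp add: algebra_simps)
qed

lemma root_nonzero: "root_system \<Phi> \<Longrightarrow> \<alpha> \<in> \<Phi> \<Longrightarrow> \<alpha> \<noteq> 0"
  unfolding root_system_def by auto

lemma root_refl: "root_system \<Phi> \<Longrightarrow> \<alpha> \<in> \<Phi> \<Longrightarrow> \<beta> \<in> \<Phi> \<Longrightarrow> refl_vec \<alpha> \<beta> \<in> \<Phi>"
  unfolding root_system_def by (auto simp: image_subset_iff)

lemma root_uminus: "root_system \<Phi> \<Longrightarrow> \<alpha> \<in> \<Phi> \<Longrightarrow> - \<alpha> \<in> \<Phi>"
  using root_refl[of \<Phi> \<alpha> \<alpha>] refl_vec_self root_nonzero by metis

lemma root_cartan_int:
  "root_system \<Phi> \<Longrightarrow> \<alpha> \<in> \<Phi> \<Longrightarrow> \<beta> \<in> \<Phi> \<Longrightarrow> 2 * (\<beta> \<bullet> \<alpha>) / (\<alpha> \<bullet> \<alpha>) \<in> \<int>"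
  unfolding root_system_def by auto

lemma roots_independent:
  assumes root: "root_system \<Phi>" and ab: "\<alpha> \<in> \<Phi>" "\<beta> \<in> \<Phi>" "\<beta> \<noteq> \<alpha>" "\<beta> \<noteq> - \<alpha>"
    and st: "s *\<^sub>R \<alpha> + t *\<^sub>R \<beta> = 0"
  shows "s = 0 \<and> t = 0"
proof (cases "t = 0")
  case True
  then show ?thesis using st root_nonzero[OF root ab(1)] by simp
next
  case False
  have tb: "t *\<^sub>R \<beta> = - (s *\<^sub>R \<alpha>)" using st by (simp add: eq_neg_iff_add_eq_0 add.commute)
  have "\<beta> = (1 / t) *\<^sub>R (t *\<^sub>R \<beta>)" using False by simp
  also have "\<dots> = (- s / t) *\<^sub>R \<alpha>" unfolding tb by simp
  finally have \<beta>: "\<beta> = (- s / t) *\<^sub>R \<alpha>" .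
  then have "- s / t = 1 \<or> - s / t = -1" using root ab unfolding root_system_def by metis
  then show ?thesis using \<beta> ab by auto
qed

lemma inner_square_less:
  fixes \<alpha> \<beta> :: "'a::real_inner"
  assumes ind: "\<And>s t. s *\<^sub>R \<alpha> + t *\<^sub>R \<beta> = 0 \<Longrightarrow> s = 0 \<and> t = 0" and b0: "\<beta> \<noteq> 0"
  shows "(\<alpha> \<bullet> \<beta>)\<^sup>2 < (\<alpha> \<bullet> \<alpha>) * (\<beta> \<bullet> \<beta>)"
proof -
  define v where "v = (\<beta> \<bullet> \<beta>) *\<^sub>R \<alpha> + (- (\<alpha> \<bullet> \<beta>)) *\<^sub>R \<beta>"
  have bb: "\<beta> \<bullet> \<beta> > 0" using b0 by simp
  have "v \<noteq> 0" using ind[of "\<beta> \<bullet> \<beta>"] bb unfolding v_def by force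
  then have "0 < v \<bullet> v" by simp
  also have "v \<bullet> v = (\<beta> \<bullet> \<beta>) * ((\<alpha> \<bullet> \<alpha>) * (\<beta> \<bullet> \<beta>) - (\<alpha> \<bullet> \<beta>)\<^sup>2)"
    unfolding v_def by (simp add: inner_commute algebra_simps power2_eq_square)
  finally show ?thesis using bb by (simp add: zero_less_mult_iff)
qed

lemma cartan_product_cases:
  assumes root: "root_system \<Phi>" and ab: "\<alpha> \<in> \<Phi>" "\<beta> \<in> \<Phi>" "\<beta> \<noteq> \<alpha>" "\<beta> \<noteq> - \<alpha>"
  defines "p \<equiv> 2 * (\<alpha> \<bullet> \<beta>) / (\<beta> \<bullet> \<beta>)" and "q \<equiv> 2 * (\<beta> \<bullet> \<alpha>) / (\<alpha> \<bullet> \<alpha>)"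
  shows "(p = 0 \<and> q = 0) \<or> (p = q \<and> p * q = 1) \<or> p * q = 2 \<or> p * q = 3"
proof -
  have aa: "\<alpha> \<bullet> \<alpha> > 0" and bb: "\<beta> \<bullet> \<beta> > 0" using root_nonzero[OF root] ab by auto
  obtain P where P: "p = of_int P"
    using root_cartan_int[OF root ab(2,1)] unfolding p_def by (auto elim: Ints_cases)
  obtain Q where Q: "q = of_int Q"
    using root_cartan_int[OF root ab(1,2)] unfolding q_def by (auto elim: Ints_cases)
  have pq: "p * q = 4 * (\<alpha> \<bullet> \<beta>)\<^sup>2 / ((\<alpha> \<bullet> \<alpha>) * (\<beta> \<bullet> \<beta>))"
    unfolding p_def q_def by (simp add: inner_commute power2_eq_square field_simps)
  have "(\<alpha> \<bullet> \<beta>)\<^sup>2 < (\<alpha> \<bullet> \<alpha>) * (\<beta> \<bullet> \<beta>)"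
    using inner_square_less roots_independent[OF root ab] root_nonzero[OF root ab(2)] by blast
  then have "p * q < 4" "0 \<le> p * q" using aa bb unfolding pq by (simp_all add: divide_less_eq)
  then have "P * Q < 4" "0 \<le> P * Q" unfolding P Q by (simp_all flip: of_int_mult)
  then have "P * Q = 0 \<or> P * Q = 1 \<or> P * Q = 2 \<or> P * Q = 3" by linarith
  moreover have "P = 0 \<longleftrightarrow> Q = 0"
  proof -
    have "p = 0 \<longleftrightarrow> \<alpha> \<bullet> \<beta> = 0" "q = 0 \<longleftrightarrow> \<alpha> \<bullet> \<beta> = 0"
      unfolding p_def q_def using aa bb by (simp_all add: inner_commute)
    then show ?thesis using P Q by simp
  qed
  moreover have "P = Q" if "P * Q = 1" using that by (auto simp: zmult_eq_1_iff)
  ultimately have "(P = 0 \<and> Q = 0) \<or> (P = Q \<and> P * Q = 1) \<or> P * Q = 2 \<or> P * Q = 3"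
    by fastforce
  moreover have "p * q = of_int (P * Q)" "p = q \<longleftrightarrow> P = Q" "p = 0 \<longleftrightarrow> P = 0" "q = 0 \<longleftrightarrow> Q = 0"
    unfolding P Q by simp_all
  ultimately show ?thesis by (simp flip: of_int_mult)
qed

section \<open>Orbits without four-term relations\<close>

definition no_four_relation :: "'a::real_vector set \<Rightarrow> bool" where
  "no_four_relation S \<longleftrightarrow> \<not> (\<exists>l1\<in>S. \<exists>l2\<in>S. \<exists>l3\<in>S. \<exists>l4\<in>S.
                  distinct [l1, l2, l3, l4] \<and> l1 + l2 = l3 + l4)"

definition isometry_of :: "'a::real_inner set \<Rightarrow> ('a \<Rightarrow> 'a) \<Rightarrow> bool" where
  "isometry_of S r \<longleftrightarrow> linear r \<and> (\<forall>v\<in>S. r v \<in> S) \<and> (\<forall>u v. r u \<bullet> r v = u \<bullet> v)"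

lemma isometry_of_comp: "isometry_of S f \<Longrightarrow> isometry_of S g \<Longrightarrow> isometry_of S (f \<circ> g)"
  unfolding isometry_of_def by (auto intro: linear_compose)

lemma isometry_of_refl_vec:
  "a \<noteq> 0 \<Longrightarrow> \<forall>v\<in>S. refl_vec a v \<in> S \<Longrightarrow> isometry_of S (refl_vec a)"
  unfolding isometry_of_def using linear_refl_vec refl_vec_inner by blast

text \<open>The four-point configuration: if \<open>r\<close> maps \<open>S\<close> into itself and negates \<open>\<alpha>\<close>,
  \<open>\<mu>, s\<^sub>\<alpha>\<mu> \<in> S\<close> with \<open>\<mu>\<close> not orthogonal to \<open>\<alpha>\<close>, then
  \<open>\<mu> + r\<mu> = s\<^sub>\<alpha>\<mu> + r(s\<^sub>\<alpha>\<mu>)\<close>; in an \<open>S\<close> without four-term relations this forces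
  the displacement \<open>\<mu> - r\<mu>\<close> to be a multiple of \<open>\<alpha>\<close>.\<close>

lemma four_point_displacement:
  fixes S :: "'a::real_inner set"
  assumes n4: "no_four_relation S" and mu: "\<mu> \<in> S" and a0: "\<alpha> \<noteq> 0"
    and refl_mu: "refl_vec \<alpha> \<mu> \<in> S" and ma: "\<mu> \<bullet> \<alpha> \<noteq> 0"
    and lin: "linear r" and rS: "\<forall>v\<in>S. r v \<in> S" and ra: "r \<alpha> = - \<alpha>"
  shows "\<exists>t. \<mu> - r \<mu> = t *\<^sub>R \<alpha>"
proof (rule ccontr)
  assume np: "\<nexists>t. \<mu> - r \<mu> = t *\<^sub>R \<alpha>"
  define a where "a = 2 * (\<mu> \<bullet> \<alpha>) / (\<alpha> \<bullet> \<alpha>)"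
  define \<nu> where "\<nu> = refl_vec \<alpha> \<mu>"
  have aa: "a *\<^sub>R \<alpha> \<noteq> 0" using a0 ma by (simp add: a_def)
  have nu: "\<nu> = \<mu> - a *\<^sub>R \<alpha>" by (simp add: \<nu>_def a_def refl_vec_def)
  have rnu: "r \<nu> = r \<mu> + a *\<^sub>R \<alpha>" using lin ra by (simp add: nu linear_diff linear_scale)
  have in_S: "\<nu> \<in> S" "r \<mu> \<in> S" "r \<nu> \<in> S" using refl_mu mu rS \<nu>_def by auto
  have "\<mu> - r \<mu> \<noteq> t *\<^sub>R \<alpha>" for t using np by blast
  from this[of 0] this[of a] this[of "a + a"]
  have "\<mu> - r \<mu> \<noteq> 0" "\<mu> - r \<mu> \<noteq> a *\<^sub>R \<alpha>" "\<mu> - r \<mu> \<noteq> a *\<^sub>R \<alpha> + a *\<^sub>R \<alpha>"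
    by (simp_all only: scaleR_zero_left scaleR_left_distrib not_False_eq_True)
  then have "distinct [\<mu>, r \<mu>, \<nu>, r \<nu>]"
    using aa unfolding rnu unfolding nu by (auto simp: algebra_simps)
  moreover have "\<mu> + r \<mu> = \<nu> + r \<nu>" using nu rnu by simp
  ultimately show False using n4 mu in_S unfolding no_four_relation_def by blast
qed

text \<open>Consequently no isometry of \<open>S\<close> can negate two independent roots \<open>\<alpha>, \<beta>\<close> that
  are both non-orthogonal to a point \<open>\<mu>\<close> of \<open>S\<close>: the displacement \<open>\<mu> - r\<mu>\<close> is
  nonzero and would lie on both lines \<open>\<real>\<alpha>\<close> and \<open>\<real>\<beta>\<close>.\<close>

lemma no_isometry_negating_pair:
  fixes S :: "'a::real_inner set"
  assumes n4: "no_four_relation S" and mu: "\<mu> \<in> S" and a0: "\<alpha> \<noteq> 0" and b0: "\<beta> \<noteq> 0"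
    and refl_a: "refl_vec \<alpha> \<mu> \<in> S" and refl_b: "refl_vec \<beta> \<mu> \<in> S"
    and ma: "\<mu> \<bullet> \<alpha> \<noteq> 0" and mb: "\<mu> \<bullet> \<beta> \<noteq> 0" and r: "isometry_of S r"
    and ra: "r \<alpha> = - \<alpha>" and rb: "r \<beta> = - \<beta>"
    and ind: "\<And>s t. s *\<^sub>R \<alpha> + t *\<^sub>R \<beta> = 0 \<Longrightarrow> s = 0 \<and> t = 0"
  shows False
proof -
  have lin: "linear r" and rS: "\<forall>v\<in>S. r v \<in> S" and ri: "r \<mu> \<bullet> r \<alpha> = \<mu> \<bullet> \<alpha>"
    using r unfolding isometry_of_def by auto
  have "\<mu> - r \<mu> \<noteq> 0" using ri ra ma by auto
  moreover obtain s t where "\<mu> - r \<mu> = s *\<^sub>R \<alpha>" "\<mu> - r \<mu> = t *\<^sub>R \<beta>"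
    using four_point_displacement[OF n4 mu a0 refl_a ma lin rS ra]
      four_point_displacement[OF n4 mu b0 refl_b mb lin rS rb] by blast
  moreover from this have "s *\<^sub>R \<alpha> + (- t) *\<^sub>R \<beta> = 0" by simp
  ultimately show False using ind by fastforce
qed

text \<open>If two roots \<open>\<alpha> \<noteq> \<pm>\<beta>\<close> are both non-orthogonal to some \<open>\<mu> \<in> S\<close>, they
  have the same length and an angle of \<open>60\<degree>\<close> or \<open>120\<degree>\<close>. Otherwise the rotation
  \<open>T = s\<^sub>\<alpha>s\<^sub>\<beta>\<close> has order 2, 4 or 6 on the plane of \<open>\<alpha>, \<beta>\<close> (Cartan product
  0, 2 or 3), so \<open>T\<close>, \<open>T\<^sup>2\<close> or \<open>T\<^sup>3\<close> negates both roots.\<close>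

lemma orbit_root_pair_angle:
  fixes \<Phi> S :: "'a::euclidean_space set"
  assumes root: "root_system \<Phi>" and n4: "no_four_relation S"
    and closed: "\<forall>\<gamma>\<in>\<Phi>. \<forall>\<nu>\<in>S. refl_vec \<gamma> \<nu> \<in> S" and mu: "\<mu> \<in> S"
    and ab: "\<alpha> \<in> \<Phi>" "\<beta> \<in> \<Phi>" "\<beta> \<noteq> \<alpha>" "\<beta> \<noteq> - \<alpha>"
    and ma: "\<mu> \<bullet> \<alpha> \<noteq> 0" and mb: "\<mu> \<bullet> \<beta> \<noteq> 0"
  shows "\<beta> \<bullet> \<beta> = \<alpha> \<bullet> \<alpha> \<and> (2 * (\<alpha> \<bullet> \<beta>) = \<alpha> \<bullet> \<alpha> \<or> 2 * (\<alpha> \<bullet> \<beta>) = - (\<alpha> \<bullet> \<alpha>))"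
proof -
  have a0: "\<alpha> \<noteq> 0" and b0: "\<beta> \<noteq> 0" using root_nonzero[OF root] ab by auto
  define p where "p = 2 * (\<alpha> \<bullet> \<beta>) / (\<beta> \<bullet> \<beta>)"
  define q where "q = 2 * (\<beta> \<bullet> \<alpha>) / (\<alpha> \<bullet> \<alpha>)"
  define T where "T = refl_vec \<alpha> \<circ> refl_vec \<beta>"
  have "isometry_of S (refl_vec \<alpha>)" "isometry_of S (refl_vec \<beta>)"
    using isometry_of_refl_vec a0 b0 closed ab by auto
  then have T: "isometry_of S T" unfolding T_def by (rule isometry_of_comp)
  have T_coords: "T (x *\<^sub>R \<alpha> + y *\<^sub>R \<beta>) = ((p * q - 1) * x + q * y) *\<^sub>R \<alpha> + (- p * x - y) *\<^sub>R \<beta>"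
    for x y unfolding T_def p_def q_def using refl_vec_pair_coords[OF a0 b0] by simp
  have Ta: "T \<alpha> = (p * q - 1) *\<^sub>R \<alpha> + (- p) *\<^sub>R \<beta>" using T_coords[of 1 0] by simp
  have Tb: "T \<beta> = q *\<^sub>R \<alpha> + (-1) *\<^sub>R \<beta>" using T_coords[of 0 1] by simp
  have no_negating: False if "isometry_of S r" "r \<alpha> = - \<alpha>" "r \<beta> = - \<beta>" for r
    using no_isometry_negating_pair[OF n4 mu a0 b0 _ _ ma mb that] closed ab mu
      roots_independent[OF root ab] by blast
  consider "p = 0" "q = 0" | "p = q" "p * q = 1" | "p * q = 2" | "p * q = 3"
    using cartan_product_cases[OF root ab] unfolding p_def q_def by blast
  then show ?thesis
  proof cases
    case 1
    then show ?thesis using no_negating[OF T] Ta Tb by simp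
  next
    case 2
    then have "(p = 1 \<and> q = 1) \<or> (p = -1 \<and> q = -1)" by (metis square_eq_1_iff)
    moreover have "\<alpha> \<bullet> \<alpha> > 0" "\<beta> \<bullet> \<beta> > 0" using a0 b0 by auto
    ultimately show ?thesis unfolding p_def q_def by (auto simp: field_simps inner_commute)
  next
    case 3
    then have "p * q = 2" "q * p = 2" by (simp_all add: mult.commute)
    then have "T (T \<alpha>) = - \<alpha>" "T (T \<beta>) = - \<beta>"
      unfolding Ta Tb T_coords by (simp_all add: algebra_simps)
    then show ?thesis using no_negating[OF isometry_of_comp[OF T T]] by simp
  next
    case 4
    then have "p * q = 3" "q * p = 3" by (simp_all add: mult.commute)
    then have "T (T (T \<alpha>)) = - \<alpha>" "T (T (T \<beta>)) = - \<beta>"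
      unfolding Ta Tb T_coords by (simp_all add: algebra_simps)
    then show ?thesis using no_negating[OF isometry_of_comp[OF T isometry_of_comp[OF T T]]] by simp
  qed
qed

section \<open>Weyl orbits\<close>

lemma weyl_group_zero: "w \<in> weyl_group \<Phi> \<Longrightarrow> w 0 = 0"
  by (induction rule: weyl_group.induct) (auto simp: refl_vec_def)

lemma orbit_base_point: "S = (\<lambda>w. w x) ` weyl_group \<Phi> \<Longrightarrow> x \<in> S"
  using imageI[OF weyl_id, of "\<lambda>w. w x" \<Phi>] by simp

lemma orbit_refl_closed:
  assumes S: "S = (\<lambda>w. w x) ` weyl_group \<Phi>" and \<gamma>: "\<gamma> \<in> \<Phi>" and \<nu>: "\<nu> \<in> S"
  shows "refl_vec \<gamma> \<nu> \<in> S"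
proof -
  obtain w where w: "w \<in> weyl_group \<Phi>" "\<nu> = w x" using S \<nu> by auto
  have "refl_vec \<gamma> \<circ> w \<in> weyl_group \<Phi>" using w \<gamma> by (intro weyl_step)
  then have "(refl_vec \<gamma> \<circ> w) x \<in> S" using S by blast
  then show ?thesis using w by simp
qed

lemma orbit_point_positive_root:
  fixes \<Phi> S :: "'a::euclidean_space set"
  assumes root: "root_system \<Phi>" and nontriv: "\<Phi> \<noteq> {}"
    and S: "S = (\<lambda>w. w x) ` weyl_group \<Phi>" and gen: "span S = UNIV"
  shows "\<exists>\<alpha>\<in>\<Phi>. x \<bullet> \<alpha> > 0"
proof -
  have "x \<noteq> 0"
  proof
    assume "x = 0"
    then have "S \<subseteq> {0}" using S weyl_group_zero by auto
    then have "span S \<subseteq> {0}" by (metis span_empty span_insert_0 span_mono)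
    then show False using gen nontriv root_nonzero[OF root] by auto
  qed
  then obtain \<alpha> where \<alpha>: "\<alpha> \<in> \<Phi>" "x \<bullet> \<alpha> \<noteq> 0"
    using orthogonal_to_span[of x \<Phi> x] root unfolding root_system_def orthogonal_def by auto
  show ?thesis
  proof (cases "x \<bullet> \<alpha> > 0")
    case False
    then have "x \<bullet> (- \<alpha>) > 0" using \<alpha> by simp
    then show ?thesis using root_uminus[OF root \<alpha>(1)] by blast
  qed (use \<alpha> in blast)
qed

text \<open>Irreducibility enforced by the orbit: if the roots split into \<open>\<Phi>\<^sub>2\<close> and its
  orthogonal complement, and the base point is orthogonal to \<open>\<Phi>\<^sub>2\<close>, then so is
  the whole orbit (the reflections in roots of either part preserve orthogonality
  to \<open>\<Phi>\<^sub>2\<close>); since the orbit spans, \<open>\<Phi>\<^sub>2\<close> is empty.\<close>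

lemma orbit_orthogonal_roots_empty:
  fixes \<Phi> S :: "'a::euclidean_space set"
  assumes root: "root_system \<Phi>" and S: "S = (\<lambda>w. w x) ` weyl_group \<Phi>"
    and gen: "span S = UNIV" and sub: "\<Phi>\<^sub>2 \<subseteq> \<Phi>" and x_orth: "\<forall>\<delta>\<in>\<Phi>\<^sub>2. x \<bullet> \<delta> = 0"
    and split: "\<forall>\<gamma>\<in>\<Phi> - \<Phi>\<^sub>2. \<forall>\<delta>\<in>\<Phi>\<^sub>2. \<gamma> \<bullet> \<delta> = 0"
  shows "\<Phi>\<^sub>2 = {}"
proof -
  have orbit_orth: "\<forall>\<delta>\<in>\<Phi>\<^sub>2. w x \<bullet> \<delta> = 0" if "w \<in> weyl_group \<Phi>" for w
    using that
  proof (induction rule: weyl_group.induct)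
    case (weyl_step w \<alpha>)
    show ?case
    proof
      fix \<delta> assume \<delta>: "\<delta> \<in> \<Phi>\<^sub>2"
      have "\<alpha> \<bullet> \<delta> = 0 \<or> w x \<bullet> \<alpha> = 0"
        using split weyl_step \<delta> by (cases "\<alpha> \<in> \<Phi>\<^sub>2") (auto simp: inner_commute)
      then show "(refl_vec \<alpha> \<circ> w) x \<bullet> \<delta> = 0"
        using weyl_step.IH \<delta> by (auto simp: refl_vec_def inner_diff_left)
    qed
  qed (use x_orth in simp)
  show ?thesis
  proof (rule ccontr)
    assume "\<Phi>\<^sub>2 \<noteq> {}"
    then obtain \<delta> where \<delta>: "\<delta> \<in> \<Phi>\<^sub>2" by auto
    have "orthogonal \<delta> y" if "y \<in> S" for y
      using orbit_orth \<delta> S that unfolding orthogonal_def by (auto simp: inner_commute)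
    then have "orthogonal \<delta> \<delta>" using orthogonal_to_span[of \<delta> S \<delta>] gen by auto
    then show False using root_nonzero[OF root] \<delta> sub unfolding orthogonal_def by auto
  qed
qed

section \<open>Stars of roots and the root system of type A\<close>

text \<open>An equiangular set (a \<^emph>\<open>star\<close>): vectors of common squared length \<open>N > 0\<close>,
  any two distinct ones at an angle of \<open>60\<degree>\<close>. A star \<open>\<Psi>\<close> with \<open>\<ell>\<close> elements
  plays the role of \<open>{e\<^sub>0 - e\<^sub>i | 1 \<le> i \<le> \<ell>}\<close>, and \<open>star_roots \<Psi>\<close> is then the
  root system \<open>A\<^sub>\<ell>\<close>.\<close>

definition equiangular :: "real \<Rightarrow> 'a::real_inner set \<Rightarrow> bool" where
  "equiangular N \<Psi> \<longleftrightarrow>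
     N > 0 \<and> (\<forall>a\<in>\<Psi>. a \<bullet> a = N) \<and> (\<forall>a\<in>\<Psi>. \<forall>b\<in>\<Psi>. a \<noteq> b \<longrightarrow> 2 * (a \<bullet> b) = N)"

definition star_roots :: "'a::real_vector set \<Rightarrow> 'a set" where
  "star_roots \<Psi> = \<Psi> \<union> uminus ` \<Psi> \<union> {a - b | a b. a \<in> \<Psi> \<and> b \<in> \<Psi> \<and> a \<noteq> b}"

lemma star_roots_uminus: "v \<in> star_roots \<Psi> \<Longrightarrow> - v \<in> star_roots \<Psi>"
  unfolding star_roots_def by (auto simp: image_iff) metis

lemma equiangular_refl_vec:
  assumes "equiangular N \<Psi>" "d \<in> \<Psi>" "a \<in> \<Psi>"
  shows "refl_vec d a = (if a = d then - d else a - d)"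
  using assms unfolding equiangular_def refl_vec_def by (auto simp: scaleR_2 inner_commute)

lemma star_roots_refl_closed:
  assumes star: "equiangular N \<Psi>" and d: "d \<in> \<Psi>" and v: "v \<in> star_roots \<Psi>"
  shows "refl_vec d v \<in> star_roots \<Psi>"
proof -
  have lin: "linear (refl_vec d)" by (rule linear_refl_vec)
  have on_star: "refl_vec d a \<in> star_roots \<Psi>" if a: "a \<in> \<Psi>" for a
    using equiangular_refl_vec[OF star d a] a d unfolding star_roots_def by auto
  consider (pos) "v \<in> \<Psi>" | (neg) a where "a \<in> \<Psi>" "v = - a"
    | (diff) a b where "a \<in> \<Psi>" "b \<in> \<Psi>" "a \<noteq> b" "v = a - b"
    using v unfolding star_roots_def by blast
  then show ?thesis
  proof cases
    case neg
    then show ?thesis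
      using star_roots_uminus[OF on_star] lin by (simp add: linear_neg)
  next
    case diff
    have "refl_vec d v = refl_vec d a - refl_vec d b" using diff lin by (simp add: linear_diff)
    also have "\<dots> = (if a = d then - b else if b = d then a else a - b)"
      using diff by (auto simp: equiangular_refl_vec[OF star d])
    finally show ?thesis using diff unfolding star_roots_def by auto
  qed (use on_star in blast)
qed

text \<open>\<dots> and consists of roots whenever the star does (\<open>a - b = s\<^sub>b a\<close>).\<close>

lemma star_roots_subset:
  assumes root: "root_system \<Phi>" and sub: "\<Psi> \<subseteq> \<Phi>" and star: "equiangular N \<Psi>"
  shows "star_roots \<Psi> \<subseteq> \<Phi>"
proof -
  have "a - b \<in> \<Phi>" if "a \<in> \<Psi>" "b \<in> \<Psi>" "a \<noteq> b" for a b
    using root_refl[OF root, of b a] equiangular_refl_vec[OF star, of b a] that sub by auto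
  then show ?thesis
    using sub root_uminus[OF root] unfolding star_roots_def by auto
qed

text \<open>A star is linearly independent: pairing a vanishing combination
  \<open>\<Sum>\<^sub>j d\<^sub>j f\<^sub>j\<close> with \<open>f\<^sub>k\<close> gives \<open>d\<^sub>k = -\<Sum>\<^sub>j d\<^sub>j\<close> for every \<open>k\<close>, whence all
  coefficients vanish.\<close>

lemma equiangular_independent:
  fixes f :: "nat \<Rightarrow> 'a::real_inner"
  assumes inj: "inj_on f I" and fin: "finite I" and star: "equiangular N (f ` I)"
    and zero: "(\<Sum>j\<in>I. d j *\<^sub>R f j) = 0"
  shows "\<forall>j\<in>I. d j = 0"
proof -
  define D where "D = (\<Sum>j\<in>I. d j)"
  have N: "N > 0" using star unfolding equiangular_def by simp
  have coeff: "d k = - D" if k: "k \<in> I" for k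
  proof -
    have "f j \<bullet> f k = N / 2 + (if j = k then N / 2 else 0)" if j: "j \<in> I" for j
    proof (cases "j = k")
      case False
      then have "f j \<noteq> f k" using inj j k by (auto dest: inj_onD)
      then have "2 * (f j \<bullet> f k) = N" using star j k unfolding equiangular_def by blast
      then show ?thesis using False by simp
    qed (use star k in \<open>auto simp: equiangular_def\<close>)
    note inner_fk = this
    have "0 = (\<Sum>j\<in>I. d j *\<^sub>R f j) \<bullet> f k" using zero by simp
    also have "\<dots> = (\<Sum>j\<in>I. d j * (f j \<bullet> f k))" by (simp add: inner_sum_left)
    also have "\<dots> = (\<Sum>j\<in>I. d j * (N / 2) + (if j = k then d j * (N / 2) else 0))"
      using inner_fk by (intro sum.cong) (auto simp: algebra_simps)
    also have "\<dots> = (N / 2) * D + d k * (N / 2)"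
      using fin k by (simp add: sum.distrib D_def sum_distrib_right sum_distrib_left mult.commute)
    finally have "(N / 2) * (D + d k) = 0" by (simp add: distrib_left mult.commute)
    then show ?thesis using N by simp
  qed
  have "D = (\<Sum>j\<in>I. d j)" by (simp add: D_def)
  also have "\<dots> = (\<Sum>j\<in>I. - D)" using coeff by (rule sum.cong[OF refl])
  finally have "(1 + real (card I)) * D = 0" by (simp add: distrib_right)
  then have "D = 0" by (simp add: add_pos_nonneg)
  then show ?thesis using coeff by simp
qed

text \<open>Given a star enumerated as \<open>f 1, \<dots>, f \<ell>\<close>, the vectors
  \<open>e\<^sub>i = c - f\<^sub>i\<close> (with \<open>f\<^sub>0 = 0\<close> and \<open>c\<close> the centroid \<open>(\<Sum>f\<^sub>j)/(\<ell>+1)\<close>) realise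
  the standard frame of \<open>\<real>\<^sup>\<ell>\<^sup>+\<^sup>1/diag(\<real>)\<close>: \<open>e\<^sub>0 - e\<^sub>i = f\<^sub>i\<close> and
  \<open>\<Sum>e\<^sub>i = 0\<close>.\<close>

definition star_frame :: "nat \<Rightarrow> (nat \<Rightarrow> 'a::real_vector) \<Rightarrow> nat \<Rightarrow> 'a" where
  "star_frame l f i = (1 / (real l + 1)) *\<^sub>R (\<Sum>j\<in>{1..l}. f j) - (if i = 0 then 0 else f i)"

lemma atMost_eq_insert_0: "{..l::nat} = insert 0 {1..l}"
  by auto

lemma star_frame_combination:
  "(\<Sum>i\<le>l. c i *\<^sub>R star_frame l f i) =
     (\<Sum>j\<in>{1..l}. ((\<Sum>i\<le>l. c i) / (real l + 1) - c j) *\<^sub>R f j)"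
proof -
  define centroid where "centroid = (1 / (real l + 1)) *\<^sub>R (\<Sum>j\<in>{1..l}. f j)"
  have "(\<Sum>i\<le>l. c i *\<^sub>R star_frame l f i) =
      c 0 *\<^sub>R centroid + (\<Sum>j\<in>{1..l}. c j *\<^sub>R centroid - c j *\<^sub>R f j)"
    unfolding atMost_eq_insert_0 by (simp add: star_frame_def centroid_def scaleR_diff_right)
  also have "\<dots> = (\<Sum>i\<le>l. c i) *\<^sub>R centroid - (\<Sum>j\<in>{1..l}. c j *\<^sub>R f j)"
    unfolding atMost_eq_insert_0 by (simp add: sum_subtractf scaleR_sum_left scaleR_left_distrib)
  finally show ?thesis
    unfolding centroid_def by (simp add: scaleR_sum_right scaleR_diff_left sum_subtractf)
qed

lemma star_frame_roots:
  assumes inj: "inj_on f {1..l}" and img: "f ` {1..l} = \<Psi>"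
  shows "A_roots l (star_frame l f) = star_roots \<Psi>"
proof -
  define e where "e = star_frame l f"
  have e0: "e 0 - e j = f j" "e j - e 0 = - f j" if "j \<in> {1..l}" for j
    using that by (auto simp: e_def star_frame_def)
  have ejk: "e k - e j = f j - f k" if "j \<in> {1..l}" "k \<in> {1..l}" for j k
    using that by (auto simp: e_def star_frame_def)
  have "e i - e j \<in> star_roots \<Psi>" if ij: "i \<le> l" "j \<le> l" "i \<noteq> j" for i j
  proof -
    consider "i = 0" "j \<in> {1..l}" | "j = 0" "i \<in> {1..l}" | "i \<in> {1..l}" "j \<in> {1..l}"
      using ij by (cases "i = 0"; cases "j = 0") auto
    then show ?thesis
    proof cases
      case 3
      then have "f j \<noteq> f i" using inj \<open>i \<noteq> j\<close> by (auto dest: inj_onD)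
      then show ?thesis using 3 ejk img unfolding star_roots_def by blast
    qed (use e0 img in \<open>auto simp: star_roots_def\<close>)
  qed
  moreover have "v \<in> A_roots l e" if v: "v \<in> star_roots \<Psi>" for v
  proof -
    consider j where "j \<in> {1..l}" "v = f j" | j where "j \<in> {1..l}" "v = - f j"
      | j k where "j \<in> {1..l}" "k \<in> {1..l}" "j \<noteq> k" "v = f j - f k"
      using v img unfolding star_roots_def by blast
    then show ?thesis
    proof cases
      case (1 j)
      then have "v = e 0 - e j" using e0 by simp
      then show ?thesis using 1 unfolding A_roots_def by fastforce
    next
      case (2 j)
      then have "v = e j - e 0" using e0 by simp
      then show ?thesis using 2 unfolding A_roots_def by fastforce
    next
      case (3 j k)
      then have "v = e k - e j" using ejk by simp
      then show ?thesis using 3 unfolding A_roots_def by fastforce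
    qed
  qed
  ultimately show ?thesis unfolding e_def[symmetric] A_roots_def by blast
qed

lemma star_frame_relations:
  assumes inj: "inj_on f {1..l}" and star: "equiangular N (f ` {1..l})"
  shows "(\<Sum>i\<le>l. c i *\<^sub>R star_frame l f i) = 0 \<longleftrightarrow> (\<forall>i\<le>l. c i = c 0)"
proof
  define C where "C = (\<Sum>i\<le>l. c i)"
  assume "(\<Sum>i\<le>l. c i *\<^sub>R star_frame l f i) = 0"
  then have "(\<Sum>j\<in>{1..l}. (C / (real l + 1) - c j) *\<^sub>R f j) = 0"
    unfolding star_frame_combination C_def .
  from equiangular_independent[OF inj finite_atLeastAtMost star this]
  have cj: "c j = C / (real l + 1)" if "j \<in> {1..l}" for j
    using that by simp
  have "C = c 0 + (\<Sum>j\<in>{1..l}. c j)" unfolding C_def atMost_eq_insert_0 by simp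
  also have "(\<Sum>j\<in>{1..l}. c j) = (\<Sum>j\<in>{1..l}. C / (real l + 1))"
    using cj by (rule sum.cong[OF refl])
  finally have "c 0 = C / (real l + 1)" by (simp add: field_simps)
  show "\<forall>i\<le>l. c i = c 0"
  proof (intro allI impI)
    fix i assume "i \<le> l"
    then show "c i = c 0" using cj \<open>c 0 = C / (real l + 1)\<close> by (cases "i = 0") auto
  qed
next
  assume const: "\<forall>i\<le>l. c i = c 0"
  have "(\<Sum>i\<le>l. c i) = (\<Sum>i\<le>l. c 0)" using const by (intro sum.cong refl) blast
  moreover have "c j = c 0" if "j \<in> {1..l}" for j using that by (intro const[rule_format]) simp
  ultimately have "(\<Sum>i\<le>l. c i) / (real l + 1) - c j = 0" if "j \<in> {1..l}" for j
    using that by (simp add: add.commute)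
  then show "(\<Sum>i\<le>l. c i *\<^sub>R star_frame l f i) = 0"
    unfolding star_frame_combination by simp
qed

lemma type_A_star_roots:
  assumes fin: "finite \<Psi>" and star: "equiangular N \<Psi>" and sp: "span (star_roots \<Psi>) = UNIV"
  shows "type_A (card \<Psi>) (star_roots \<Psi>)"
proof -
  define l where "l = card \<Psi>"
  obtain f where "bij_betw f {1..l} \<Psi>"
    using ex_bij_betw_nat_finite_1[OF fin] l_def by auto
  then have inj: "inj_on f {1..l}" and img: "f ` {1..l} = \<Psi>" by (auto simp: bij_betw_def)
  define e where "e = star_frame l f"
  have roots: "A_roots l e = star_roots \<Psi>" unfolding e_def by (rule star_frame_roots[OF inj img])
  have "e i \<in> span (e ` {0..l})" if "i \<le> l" for i using that by (auto intro: span_base)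
  then have "star_roots \<Psi> \<subseteq> span (e ` {0..l})"
    unfolding roots[symmetric] A_roots_def by (auto intro: span_diff)
  then have "span (e ` {0..l}) = UNIV" using sp by (metis span_mono span_span top.extremum_unique)
  moreover have "(\<Sum>i\<le>l. c i *\<^sub>R e i) = 0 \<longleftrightarrow> (\<forall>i\<le>l. c i = c 0)" for c
    unfolding e_def using star_frame_relations[OF inj] star img by blast
  ultimately show ?thesis
    unfolding type_A_def quotient_basis_def l_def[symmetric] using roots by blast
qed

text \<open>A root \<open>g\<close> orthogonal to \<open>x\<close> but not to some \<open>d \<in> \<Psi>\<close> is the
  reflection in \<open>d\<close> of the root \<open>s\<^sub>d g\<close>, which is not orthogonal to \<open>x\<close>; so every
  root outside the orthogonal complement \<open>\<Phi>\<^sub>2\<close> of \<open>\<Psi>\<close> lies in \<open>star_roots \<Psi>\<close>,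
  and \<open>\<Phi>\<^sub>2\<close> is empty because the orbit spans.\<close>

lemma roots_eq_star_roots:
  fixes \<Phi> S :: "'a::euclidean_space set"
  assumes root: "root_system \<Phi>" and S: "S = (\<lambda>w. w x) ` weyl_group \<Phi>" and gen: "span S = UNIV"
    and sub: "\<Psi> \<subseteq> \<Phi>" and star: "equiangular N \<Psi>" and off: "\<forall>d\<in>\<Psi>. x \<bullet> d \<noteq> 0"
    and cover: "\<forall>g\<in>\<Phi>. x \<bullet> g > 0 \<longrightarrow> g \<in> star_roots \<Psi>"
  shows "\<Phi> = star_roots \<Psi>"
proof -
  have N: "N > 0" and norm: "\<forall>d\<in>\<Psi>. d \<bullet> d = N" using star unfolding equiangular_def by auto
  have cover_all: "g \<in> star_roots \<Psi>" if g: "g \<in> \<Phi>" "x \<bullet> g \<noteq> 0" for g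
  proof (cases "x \<bullet> g > 0")
    case False
    then have "- g \<in> star_roots \<Psi>" using cover root_uminus[OF root g(1)] g(2) by auto
    then show ?thesis using star_roots_uminus by fastforce
  qed (use cover g in blast)
  define \<Phi>\<^sub>2 where "\<Phi>\<^sub>2 = {g \<in> \<Phi>. \<forall>d\<in>\<Psi>. g \<bullet> d = 0}"
  have outside: "g \<in> star_roots \<Psi>" if g: "g \<in> \<Phi>" "g \<notin> \<Phi>\<^sub>2" for g
  proof (cases "x \<bullet> g = 0")
    case True
    obtain d where d: "d \<in> \<Psi>" "g \<bullet> d \<noteq> 0" using g unfolding \<Phi>\<^sub>2_def by auto
    define \<eta> where "\<eta> = refl_vec d g"
    have "\<eta> \<in> \<Phi>" unfolding \<eta>_def using root_refl[OF root] sub d g by auto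
    moreover have "x \<bullet> \<eta> \<noteq> 0"
      unfolding \<eta>_def inner_refl_vec_right True using d off norm N by auto
    ultimately have "\<eta> \<in> star_roots \<Psi>" by (rule cover_all)
    moreover have "g = refl_vec d \<eta>" unfolding \<eta>_def using refl_vec_invol d norm N by fastforce
    ultimately show ?thesis using star_roots_refl_closed[OF star d(1)] by simp
  qed (use cover_all g in blast)
  have orth: "v \<bullet> g = 0" if "g \<in> \<Phi>\<^sub>2" "v \<in> star_roots \<Psi>" for v g
    using that unfolding \<Phi>\<^sub>2_def star_roots_def
    by (auto simp: inner_diff_left inner_diff_right inner_commute[of _ g])
  have "\<Phi>\<^sub>2 = {}"
  proof (rule orbit_orthogonal_roots_empty[OF root S gen])
    show "\<Phi>\<^sub>2 \<subseteq> \<Phi>" unfolding \<Phi>\<^sub>2_def by auto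
    show "\<forall>\<delta>\<in>\<Phi>\<^sub>2. x \<bullet> \<delta> = 0"
    proof
      fix \<delta> assume \<delta>: "\<delta> \<in> \<Phi>\<^sub>2"
      show "x \<bullet> \<delta> = 0"
      proof (rule ccontr)
        assume "x \<bullet> \<delta> \<noteq> 0"
        then have "\<delta> \<bullet> \<delta> = 0" using cover_all orth[OF \<delta>] \<delta> unfolding \<Phi>\<^sub>2_def by blast
        then show False using root_nonzero[OF root] \<delta> unfolding \<Phi>\<^sub>2_def by auto
      qed
    qed
    show "\<forall>\<gamma>\<in>\<Phi> - \<Phi>\<^sub>2. \<forall>\<delta>\<in>\<Phi>\<^sub>2. \<gamma> \<bullet> \<delta> = 0" using outside orth by blast
  qed
  then show ?thesis using outside star_roots_subset[OF root sub star] by blast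
qed

section \<open>First claim: \<open>\<Phi>\<close> is of type A\<close>

lemma positive_roots_angle:
  fixes \<Phi> S :: "'a::euclidean_space set"
  assumes root: "root_system \<Phi>" and n4: "no_four_relation S"
    and closed: "\<forall>\<gamma>\<in>\<Phi>. \<forall>\<nu>\<in>S. refl_vec \<gamma> \<nu> \<in> S" and xS: "x \<in> S"
    and gh: "g \<in> \<Phi>" "h \<in> \<Phi>" "x \<bullet> g > 0" "x \<bullet> h > 0" "g \<noteq> h"
  shows "h \<bullet> h = g \<bullet> g \<and> (2 * (g \<bullet> h) = g \<bullet> g \<or> 2 * (g \<bullet> h) = - (g \<bullet> g))"
proof -
  have "h \<noteq> - g" using gh by auto
  then show ?thesis using orbit_root_pair_angle[OF root n4 closed xS gh(1,2)] gh by auto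
qed

text \<open>If two positive roots \<open>\<alpha>, \<beta>\<close> meet at \<open>120\<degree>\<close>, the positive roots are exactly
  \<open>\<alpha>, \<beta>, \<alpha> + \<beta>\<close> (any further one would meet each of these at \<open>\<pm>60\<degree>\<close>, which is
  incompatible with \<open>(\<alpha> + \<beta>) \<bullet> g = \<alpha> \<bullet> g + \<beta> \<bullet> g\<close>), and they all lie in the
  root system of the star \<open>{\<alpha>, \<alpha> + \<beta>}\<close>.\<close>

lemma obtuse_pair_star:
  fixes \<Phi> S :: "'a::euclidean_space set"
  assumes root: "root_system \<Phi>" and n4: "no_four_relation S"
    and closed: "\<forall>\<gamma>\<in>\<Phi>. \<forall>\<nu>\<in>S. refl_vec \<gamma> \<nu> \<in> S" and xS: "x \<in> S"
    and ab: "\<alpha> \<in> \<Phi>" "\<beta> \<in> \<Phi>" "x \<bullet> \<alpha> > 0" "x \<bullet> \<beta> > 0" "\<alpha> \<bullet> \<beta> < 0"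
  shows "{\<alpha>, \<alpha> + \<beta>} \<subseteq> \<Phi> \<and> equiangular (\<alpha> \<bullet> \<alpha>) {\<alpha>, \<alpha> + \<beta>} \<and> x \<bullet> (\<alpha> + \<beta>) > 0 \<and>
         (\<forall>g\<in>\<Phi>. x \<bullet> g > 0 \<longrightarrow> g \<in> star_roots {\<alpha>, \<alpha> + \<beta>})"
proof -
  define N where "N = \<alpha> \<bullet> \<alpha>"
  note angle = positive_roots_angle[OF root n4 closed xS]
  have N: "N > 0" using root_nonzero[OF root ab(1)] unfolding N_def by simp
  have "\<alpha> \<noteq> \<beta>" using ab(5) by (metis inner_ge_zero not_le)
  then have bb: "\<beta> \<bullet> \<beta> = N" and ab2: "2 * (\<alpha> \<bullet> \<beta>) = - N"
    using angle[OF ab(1-4)] ab(5) N unfolding N_def by auto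
  have "refl_vec \<beta> \<alpha> = \<alpha> + \<beta>"
    using ab2 bb N unfolding refl_vec_def by (simp add: field_simps)
  then have abP: "\<alpha> + \<beta> \<in> \<Phi>" using root_refl[OF root ab(2,1)] by simp
  have xab: "x \<bullet> (\<alpha> + \<beta>) > 0" using ab(3,4) by (simp add: inner_add_right)
  have abab: "(\<alpha> + \<beta>) \<bullet> (\<alpha> + \<beta>) = N"
    using ab2 bb unfolding N_def by (simp add: inner_add_left inner_add_right inner_commute)
  have star: "equiangular N {\<alpha>, \<alpha> + \<beta>}"
    using N abab ab2 unfolding equiangular_def N_def
    by (auto simp: inner_commute algebra_simps)
  have positive: "g \<in> {\<alpha>, \<beta>, \<alpha> + \<beta>}" if g: "g \<in> \<Phi>" "x \<bullet> g > 0" for g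
  proof (rule ccontr)
    assume "g \<notin> {\<alpha>, \<beta>, \<alpha> + \<beta>}"
    then have "2 * (\<alpha> \<bullet> g) = N \<or> 2 * (\<alpha> \<bullet> g) = - N" "2 * (\<beta> \<bullet> g) = N \<or> 2 * (\<beta> \<bullet> g) = - N"
      "2 * ((\<alpha> + \<beta>) \<bullet> g) = N \<or> 2 * ((\<alpha> + \<beta>) \<bullet> g) = - N"
      using angle[OF ab(1) g(1) ab(3) g(2)] angle[OF ab(2) g(1) ab(4) g(2)]
        angle[OF abP g(1) xab g(2)] bb abab
      unfolding N_def by auto
    then show False using N by (auto simp: inner_add_left)
  qed
  have "\<beta> = (\<alpha> + \<beta>) - \<alpha>" "\<alpha> + \<beta> \<noteq> \<alpha>" using root_nonzero[OF root ab(2)] by auto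
  then have "{\<alpha>, \<beta>, \<alpha> + \<beta>} \<subseteq> star_roots {\<alpha>, \<alpha> + \<beta>}" unfolding star_roots_def by blast
  then show ?thesis using positive star xab ab(1) abP unfolding N_def by blast
qed

lemma nonobtuse_positive_roots_star:
  fixes \<Phi> S :: "'a::euclidean_space set"
  assumes root: "root_system \<Phi>" and n4: "no_four_relation S"
    and closed: "\<forall>\<gamma>\<in>\<Phi>. \<forall>\<nu>\<in>S. refl_vec \<gamma> \<nu> \<in> S" and xS: "x \<in> S"
    and \<alpha>\<^sub>0: "\<alpha>\<^sub>0 \<in> \<Phi>" "x \<bullet> \<alpha>\<^sub>0 > 0"
    and nonobtuse: "\<forall>g\<in>\<Phi>. \<forall>h\<in>\<Phi>. x \<bullet> g > 0 \<longrightarrow> x \<bullet> h > 0 \<longrightarrow> g \<bullet> h \<ge> 0"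
  shows "equiangular (\<alpha>\<^sub>0 \<bullet> \<alpha>\<^sub>0) {\<alpha>\<in>\<Phi>. x \<bullet> \<alpha> > 0}"
proof -
  note angle = positive_roots_angle[OF root n4 closed xS]
  define N where "N = \<alpha>\<^sub>0 \<bullet> \<alpha>\<^sub>0"
  have norm: "g \<bullet> g = N" if "g \<in> \<Phi>" "x \<bullet> g > 0" for g
  proof (cases "g = \<alpha>\<^sub>0")
    case False
    then show ?thesis using angle[of \<alpha>\<^sub>0 g] \<alpha>\<^sub>0 that unfolding N_def by auto
  qed (simp add: N_def)
  have pairs: "2 * (g \<bullet> h) = N" if "g \<in> \<Phi>" "h \<in> \<Phi>" "x \<bullet> g > 0" "x \<bullet> h > 0" "g \<noteq> h" for g h
  proof -
    have "2 * (g \<bullet> h) = g \<bullet> g \<or> 2 * (g \<bullet> h) = - (g \<bullet> g)" using angle[of g h] that by auto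
    moreover have "g \<bullet> g > 0" using root_nonzero[OF root] that by auto
    moreover have "g \<bullet> h \<ge> 0" using nonobtuse that by blast
    ultimately show ?thesis using norm[OF that(1,3)] by linarith
  qed
  have "N > 0" using root_nonzero[OF root] \<alpha>\<^sub>0 unfolding N_def by auto
  then show ?thesis unfolding equiangular_def N_def[symmetric] using norm pairs by simp
qed

lemma positive_roots_star:
  fixes \<Phi> S :: "'a::euclidean_space set"
  assumes root: "root_system \<Phi>" and n4: "no_four_relation S"
    and closed: "\<forall>\<gamma>\<in>\<Phi>. \<forall>\<nu>\<in>S. refl_vec \<gamma> \<nu> \<in> S" and xS: "x \<in> S"
    and \<alpha>\<^sub>0: "\<alpha>\<^sub>0 \<in> \<Phi>" "x \<bullet> \<alpha>\<^sub>0 > 0"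
  obtains \<Psi> N where "\<Psi> \<subseteq> {\<alpha>\<in>\<Phi>. x \<bullet> \<alpha> > 0}" "\<Psi> \<noteq> {}" "equiangular N \<Psi>"
    and "\<forall>g\<in>\<Phi>. x \<bullet> g > 0 \<longrightarrow> g \<in> star_roots \<Psi>"
proof (cases "\<forall>g\<in>\<Phi>. \<forall>h\<in>\<Phi>. x \<bullet> g > 0 \<longrightarrow> x \<bullet> h > 0 \<longrightarrow> g \<bullet> h \<ge> 0")
  case True
  have "\<forall>g\<in>\<Phi>. x \<bullet> g > 0 \<longrightarrow> g \<in> star_roots {\<alpha>\<in>\<Phi>. x \<bullet> \<alpha> > 0}"
    by (simp add: star_roots_def)
  then show ?thesis
    using that nonobtuse_positive_roots_star[OF root n4 closed xS \<alpha>\<^sub>0 True] \<alpha>\<^sub>0 by blast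
next
  case False
  then obtain \<alpha> \<beta> where ab: "\<alpha> \<in> \<Phi>" "\<beta> \<in> \<Phi>" "x \<bullet> \<alpha> > 0" "x \<bullet> \<beta> > 0" "\<alpha> \<bullet> \<beta> < 0"
    by (auto simp: not_le)
  note pair = obtuse_pair_star[OF root n4 closed xS ab]
  show ?thesis
  proof (rule that[of "{\<alpha>, \<alpha> + \<beta>}" "\<alpha> \<bullet> \<alpha>"])
    show "{\<alpha>, \<alpha> + \<beta>} \<subseteq> {\<alpha>\<in>\<Phi>. x \<bullet> \<alpha> > 0}" using pair ab by auto
  qed (use pair in simp_all)
qed

lemma exists_type_A:
  fixes \<Phi> S :: "'a::euclidean_space set"
  assumes root: "root_system \<Phi>" and nontriv: "\<Phi> \<noteq> {}"
    and S: "S = (\<lambda>w. w x) ` weyl_group \<Phi>" and gen: "span S = UNIV" and n4: "no_four_relation S"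
  shows "\<exists>l\<ge>1. type_A l \<Phi>"
proof -
  have closed: "\<forall>\<gamma>\<in>\<Phi>. \<forall>\<nu>\<in>S. refl_vec \<gamma> \<nu> \<in> S" using orbit_refl_closed[OF S] by blast
  obtain \<alpha>\<^sub>0 where "\<alpha>\<^sub>0 \<in> \<Phi>" "x \<bullet> \<alpha>\<^sub>0 > 0" using orbit_point_positive_root[OF root nontriv S gen] by blast
  then obtain \<Psi> N where \<Psi>: "\<Psi> \<subseteq> {\<alpha>\<in>\<Phi>. x \<bullet> \<alpha> > 0}" "\<Psi> \<noteq> {}" "equiangular N \<Psi>"
    and cover: "\<forall>g\<in>\<Phi>. x \<bullet> g > 0 \<longrightarrow> g \<in> star_roots \<Psi>"
    using positive_roots_star[OF root n4 closed orbit_base_point[OF S]] by metis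
  have sub: "\<Psi> \<subseteq> \<Phi>" and off: "\<forall>d\<in>\<Psi>. x \<bullet> d \<noteq> 0" using \<Psi>(1) by auto
  have fin: "finite \<Psi>" using finite_subset[OF sub] root unfolding root_system_def by blast
  have \<Phi>: "\<Phi> = star_roots \<Psi>" by (rule roots_eq_star_roots[OF root S gen sub \<Psi>(3) off cover])
  then have "span (star_roots \<Psi>) = UNIV" using root unfolding root_system_def by simp
  then have "type_A (card \<Psi>) \<Phi>" unfolding \<Phi> by (rule type_A_star_roots[OF fin \<Psi>(3)])
  moreover have "card \<Psi> \<ge> 1" using fin \<Psi>(2) by (simp add: Suc_le_eq card_gt_0_iff)
  ultimately show ?thesis by blast
qed

section \<open>Second claim: the orbit in the standard model of \<open>A\<^sub>\<ell>\<close>\<close>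

lemma orthogonal_roots_at_orbit_point:
  fixes \<Phi> S :: "'a::euclidean_space set"
  assumes root: "root_system \<Phi>" and n4: "no_four_relation S"
    and closed: "\<forall>\<gamma>\<in>\<Phi>. \<forall>\<nu>\<in>S. refl_vec \<gamma> \<nu> \<in> S" and mu: "\<mu> \<in> S"
    and ab: "\<alpha> \<in> \<Phi>" "\<beta> \<in> \<Phi>" "\<alpha> \<bullet> \<beta> = 0"
  shows "\<mu> \<bullet> \<alpha> = 0 \<or> \<mu> \<bullet> \<beta> = 0"
proof (rule ccontr)
  assume "\<not> ?thesis"
  moreover have "\<alpha> \<bullet> \<alpha> \<noteq> 0" using root_nonzero[OF root ab(1)] by simp
  moreover from this have "\<beta> \<noteq> \<alpha>" "\<beta> \<noteq> - \<alpha>" using ab(3) by auto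
  ultimately show False using orbit_root_pair_angle[OF root n4 closed mu ab(1,2)] ab(3) by auto
qed

lemma iso_inner:
  "isometric_quotient_basis l e \<Longrightarrow> i \<le> l \<Longrightarrow> j \<le> l \<Longrightarrow>
     e i \<bullet> e j = (if i = j then 1 else 0) - 1 / (real l + 1)"
  unfolding isometric_quotient_basis_def by auto

lemma iso_relations:
  "isometric_quotient_basis l e \<Longrightarrow> (\<Sum>i\<le>l. c i *\<^sub>R e i) = 0 \<longleftrightarrow> (\<forall>i\<le>l. c i = c 0)"
  unfolding isometric_quotient_basis_def quotient_basis_def by blast

lemma iso_sum_zero: "isometric_quotient_basis l e \<Longrightarrow> (\<Sum>i\<le>l. e i) = 0"
  using iso_relations[of l e "\<lambda>_. 1"] by simp

lemma iso_coord_inner: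
  assumes iso: "isometric_quotient_basis l e" and ab: "a \<le> l" "b \<le> l"
  shows "(\<Sum>k\<le>l. c k *\<^sub>R e k) \<bullet> (e a - e b) = c a - c b"
proof -
  have "(\<Sum>k\<le>l. c k *\<^sub>R e k) \<bullet> e a = c a - (\<Sum>k\<le>l. c k) / (real l + 1)" if a: "a \<le> l" for a
  proof -
    have "(\<Sum>k\<le>l. c k *\<^sub>R e k) \<bullet> e a = (\<Sum>k\<le>l. c k * (e k \<bullet> e a))"
      by (simp add: inner_sum_left)
    also have "\<dots> = (\<Sum>k\<le>l. (if k = a then c k else 0) - c k / (real l + 1))"
      using a by (intro sum.cong refl) (auto simp: iso_inner[OF iso] algebra_simps)
    also have "\<dots> = c a - (\<Sum>k\<le>l. c k) / (real l + 1)"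
      using a by (simp add: sum_subtractf sum_divide_distrib)
    finally show ?thesis .
  qed
  then show ?thesis using ab by (simp add: inner_diff_right)
qed

text \<open>The roots \<open>e\<^sub>a - e\<^sub>b\<close> have squared length 2, which simplifies their reflections.\<close>

lemma iso_refl_vec:
  assumes iso: "isometric_quotient_basis l e" and ab: "a \<le> l" "b \<le> l" "a \<noteq> b"
  shows "refl_vec (e a - e b) u = u - (u \<bullet> (e a - e b)) *\<^sub>R (e a - e b)"
proof -
  have "(e a - e b) \<bullet> (e a - e b) = 2"
    using ab by (simp add: inner_diff_left inner_diff_right inner_commute iso_inner[OF iso])
  then show ?thesis unfolding refl_vec_def by simp
qed

lemma iso_coordinates:
  assumes iso: "isometric_quotient_basis l e"
  obtains \<xi> where "x = (\<Sum>i\<le>l. \<xi> i *\<^sub>R e i)"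
proof -
  have "inj_on e {..l}"
  proof (rule inj_onI)
    fix i j assume ij: "i \<in> {..l}" "j \<in> {..l}" "e i = e j"
    then have "e i \<bullet> e i = e i \<bullet> e j" by simp
    show "i = j"
    proof (rule ccontr)
      assume "i \<noteq> j"
      then show False
        using \<open>e i \<bullet> e i = e i \<bullet> e j\<close> iso_inner[OF iso, of i i] iso_inner[OF iso, of i j] ij by simp
    qed
  qed
  moreover have "span (e ` {..l}) = UNIV"
    using iso unfolding isometric_quotient_basis_def quotient_basis_def atLeast0AtMost by blast
  then obtain u where "x = (\<Sum>v\<in>e ` {..l}. u v *\<^sub>R v)"
    using span_finite[of "e ` {..l}"] by auto
  ultimately have "x = (\<Sum>i\<le>l. (u \<circ> e) i *\<^sub>R e i)" by (simp add: sum.reindex)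
  then show ?thesis by (rule that)
qed

lemma iso_refl_vertex:
  assumes iso: "isometric_quotient_basis l e" and ab: "a \<le> l" "b \<le> l" "a \<noteq> b" and i: "i \<le> l"
  shows "refl_vec (e a - e b) (c *\<^sub>R e i) = c *\<^sub>R e (if i = a then b else if i = b then a else i)"
proof -
  have "(c *\<^sub>R e i) \<bullet> (e a - e b) = c * ((if i = a then 1 else 0) - (if i = b then 1 else 0))"
    using ab i by (simp add: iso_inner[OF iso] algebra_simps)
  then have "refl_vec (e a - e b) (c *\<^sub>R e i) =
      c *\<^sub>R e i - (c * ((if i = a then 1 else 0) - (if i = b then 1 else 0))) *\<^sub>R (e a - e b)"
    by (simp add: iso_refl_vec[OF iso ab])
  then show ?thesis using ab by (auto simp: algebra_simps)
qed

lemma one_exception_or_three_values: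
  fixes \<xi> :: "nat \<Rightarrow> 'b"
  assumes P: "\<And>a b c d. a \<le> l \<Longrightarrow> b \<le> l \<Longrightarrow> c \<le> l \<Longrightarrow> d \<le> l \<Longrightarrow> distinct [a, b, c, d] \<Longrightarrow>
                \<xi> a = \<xi> b \<or> \<xi> c = \<xi> d"
  shows "(\<exists>k\<le>l. \<exists>t. \<forall>j\<le>l. j \<noteq> k \<longrightarrow> \<xi> j = t) \<or> (l = 2 \<and> distinct [\<xi> 0, \<xi> 1, \<xi> 2])"
proof (cases "\<exists>i\<le>l. \<exists>j\<le>l. \<xi> i \<noteq> \<xi> j")
  case False
  then have "\<forall>j\<le>l. j \<noteq> 0 \<longrightarrow> \<xi> j = \<xi> 0" by blast
  then show ?thesis by blast
next
  case True
  then obtain i j where ij: "i \<le> l" "j \<le> l" "\<xi> i \<noteq> \<xi> j" by blast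
  have rest: "\<xi> m = \<xi> m'" if "m \<le> l" "m' \<le> l" "m \<notin> {i, j}" "m' \<notin> {i, j}" for m m'
    using P[of i j m m'] ij that by (cases "m = m'") auto
  show ?thesis
  proof (cases "\<forall>m\<le>l. m \<notin> {i, j} \<longrightarrow> \<xi> m = \<xi> i")
    case True
    then have "\<forall>m\<le>l. m \<noteq> j \<longrightarrow> \<xi> m = \<xi> i" by auto
    then show ?thesis using ij by blast
  next
    case not_i: False
    show ?thesis
    proof (cases "\<forall>m\<le>l. m \<notin> {i, j} \<longrightarrow> \<xi> m = \<xi> j")
      case True
      then have "\<forall>m\<le>l. m \<noteq> i \<longrightarrow> \<xi> m = \<xi> j" by auto
      then show ?thesis using ij by blast
    next
      case False
      then obtain m' where m': "m' \<le> l" "m' \<notin> {i, j}" "\<xi> m' \<noteq> \<xi> j" by blast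
      obtain m where m: "m \<le> l" "m \<notin> {i, j}" "\<xi> m \<noteq> \<xi> i" using not_i by blast
      have "\<xi> m \<noteq> \<xi> j" using rest[of m m'] m m' by auto
      have all: "{..l} = {i, j, m}"
      proof (rule ccontr)
        assume "{..l} \<noteq> {i, j, m}"
        then obtain n where "n \<le> l" "n \<notin> {i, j, m}" using ij m by auto
        then show False
          using P[of i n j m] rest[of n m] ij m \<open>\<xi> m \<noteq> \<xi> j\<close> by auto
      qed
      have "Suc l = card {i, j, m}" unfolding all[symmetric] by simp
      also have "\<dots> = 3" using ij m by (auto simp: card_insert_if)
      finally have "l = 2" by simp
      moreover have "\<xi> p \<noteq> \<xi> q" if "p \<le> l" "q \<le> l" "p \<noteq> q" for p q
        using that all ij m \<open>\<xi> m \<noteq> \<xi> j\<close> by (auto simp: set_eq_iff)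
      ultimately show ?thesis by simp
    qed
  qed
qed

lemma orbit_coordinates_pattern:
  fixes \<Phi> S :: "'a::euclidean_space set"
  assumes root: "root_system \<Phi>" and n4: "no_four_relation S"
    and closed: "\<forall>\<gamma>\<in>\<Phi>. \<forall>\<nu>\<in>S. refl_vec \<gamma> \<nu> \<in> S" and xS: "x \<in> S"
    and iso: "isometric_quotient_basis l e" and \<Phi>: "\<Phi> = A_roots l e"
    and x: "x = (\<Sum>i\<le>l. \<xi> i *\<^sub>R e i)"
  shows "(\<exists>k\<le>l. \<exists>t. \<forall>j\<le>l. j \<noteq> k \<longrightarrow> \<xi> j = t) \<or> (l = 2 \<and> distinct [\<xi> 0, \<xi> 1, \<xi> 2])"
proof (rule one_exception_or_three_values)
  fix a b c d assume abcd: "a \<le> l" "b \<le> l" "c \<le> l" "d \<le> l" "distinct [a, b, c, d]"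
  have roots: "e a - e b \<in> \<Phi>" "e c - e d \<in> \<Phi>" unfolding \<Phi> A_roots_def using abcd by auto
  have "(e a - e b) \<bullet> (e c - e d) = 0"
    using abcd by (simp add: inner_diff_left inner_diff_right iso_inner[OF iso])
  then have "x \<bullet> (e a - e b) = 0 \<or> x \<bullet> (e c - e d) = 0"
    by (rule orthogonal_roots_at_orbit_point[OF root n4 closed xS roots])
  then show "\<xi> a = \<xi> b \<or> \<xi> c = \<xi> d" unfolding x using iso_coord_inner[OF iso] abcd by auto
qed

definition six_term_relation :: "'a::real_vector set \<Rightarrow> bool" where
  "six_term_relation S \<longleftrightarrow> (\<exists>l1\<in>S. \<exists>l2\<in>S. \<exists>l3\<in>S. \<exists>l4\<in>S. \<exists>l5\<in>S. \<exists>l6\<in>S.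
      distinct [l1, l2, l3, l4, l5, l6] \<and> l1 + l2 + l3 = l4 + l5 + l6)"

lemma sum_atMost_2: "(\<Sum>i\<le>2::nat. g i) = g 0 + g 1 + (g 2 :: 'b::comm_monoid_add)"
  by (simp add: eval_nat_numeral atMost_Suc add_ac)

lemma A2_coordinates_eq:
  fixes e :: "nat \<Rightarrow> 'a::real_inner"
  assumes iso: "isometric_quotient_basis 2 e"
    and eq: "a *\<^sub>R e 0 + b *\<^sub>R e 1 + c *\<^sub>R e 2 = a' *\<^sub>R e 0 + b' *\<^sub>R e 1 + c' *\<^sub>R e 2"
  shows "a - a' = b - b' \<and> b - b' = c - c'"
proof -
  define f :: "nat \<Rightarrow> real" where "f i = (if i = 0 then a - a' else if i = 1 then b - b' else c - c')" for i
  have f: "f 0 = a - a'" "f 1 = b - b'" "f 2 = c - c'" unfolding f_def by simp_all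
  then have "(\<Sum>i\<le>2. f i *\<^sub>R e i) = (a *\<^sub>R e 0 + b *\<^sub>R e 1 + c *\<^sub>R e 2) - (a' *\<^sub>R e 0 + b' *\<^sub>R e 1 + c' *\<^sub>R e 2)"
    unfolding sum_atMost_2 by (simp add: scaleR_diff_left)
  then have "(\<Sum>i\<le>2. f i *\<^sub>R e i) = 0" using eq by simp
  then have const: "\<forall>i\<le>2. f i = f 0" using iso_relations[OF iso, of f] by blast
  have "f 1 = f 0" "f 2 = f 0" using const[rule_format, of 1] const[rule_format, of 2] by simp_all
  then show ?thesis using f by simp
qed

lemma A2_reflections:
  fixes e :: "nat \<Rightarrow> 'a::real_inner" and a b c :: real
  assumes iso: "isometric_quotient_basis 2 e"
  defines "u \<equiv> a *\<^sub>R e 0 + b *\<^sub>R e 1 + c *\<^sub>R e 2"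
  shows "refl_vec (e 0 - e 1) u = b *\<^sub>R e 0 + a *\<^sub>R e 1 + c *\<^sub>R e 2"
    and "refl_vec (e 1 - e 2) u = a *\<^sub>R e 0 + c *\<^sub>R e 1 + b *\<^sub>R e 2"
    and "refl_vec (e 0 - e 2) u = c *\<^sub>R e 0 + b *\<^sub>R e 1 + a *\<^sub>R e 2"
proof -
  define coords :: "nat \<Rightarrow> real" where "coords i = (if i = 0 then a else if i = 1 then b else c)" for i
  have "u = (\<Sum>i\<le>2. coords i *\<^sub>R e i)" unfolding sum_atMost_2 u_def coords_def by simp
  then have inner: "u \<bullet> (e 0 - e 1) = a - b" "u \<bullet> (e 1 - e 2) = b - c" "u \<bullet> (e 0 - e 2) = a - c"
    by (simp_all add: iso_coord_inner[OF iso] coords_def)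
  have refl: "refl_vec (e i - e j) u = u - (u \<bullet> (e i - e j)) *\<^sub>R (e i - e j)"
    if "i \<le> 2" "j \<le> 2" "i \<noteq> j" for i j
    by (rule iso_refl_vec[OF iso that])
  have "refl_vec (e 0 - e 1) u = u - (a - b) *\<^sub>R (e 0 - e 1)" using refl[of 0 1] inner by simp
  then show "refl_vec (e 0 - e 1) u = b *\<^sub>R e 0 + a *\<^sub>R e 1 + c *\<^sub>R e 2"
    unfolding u_def by (simp add: algebra_simps)
  have "refl_vec (e 1 - e 2) u = u - (b - c) *\<^sub>R (e 1 - e 2)" using refl[of 1 2] inner by simp
  then show "refl_vec (e 1 - e 2) u = a *\<^sub>R e 0 + c *\<^sub>R e 1 + b *\<^sub>R e 2"
    unfolding u_def by (simp add: algebra_simps)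
  have "refl_vec (e 0 - e 2) u = u - (a - c) *\<^sub>R (e 0 - e 2)" using refl[of 0 2] inner by simp
  then show "refl_vec (e 0 - e 2) u = c *\<^sub>R e 0 + b *\<^sub>R e 1 + a *\<^sub>R e 2"
    unfolding u_def by (simp add: algebra_simps)
qed

text \<open>In type \<open>A\<^sub>2\<close> a point with three distinct coordinates has six distinct
  images under the permutations of coordinates, and the three cyclic ones have the
  same sum as the three transpositions.\<close>

lemma A2_six_term_relation:
  fixes e :: "nat \<Rightarrow> 'a::real_inner"
  assumes iso: "isometric_quotient_basis 2 e"
    and closed: "\<And>a b u. a \<le> 2 \<Longrightarrow> b \<le> 2 \<Longrightarrow> a \<noteq> b \<Longrightarrow> u \<in> S \<Longrightarrow> refl_vec (e a - e b) u \<in> S"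
    and xS: "p *\<^sub>R e 0 + q *\<^sub>R e 1 + r *\<^sub>R e 2 \<in> S" and pqr: "distinct [p, q, r]"
  shows "six_term_relation S"
proof -
  define v where "v a b c = a *\<^sub>R e 0 + b *\<^sub>R e 1 + c *\<^sub>R e 2" for a b c
  note refl = A2_reflections[OF iso, folded v_def]
  have closed01: "refl_vec (e 0 - e 1) u \<in> S" and closed12: "refl_vec (e 1 - e 2) u \<in> S"
    and closed02: "refl_vec (e 0 - e 2) u \<in> S" if "u \<in> S" for u
    using closed[of 0 1 u] closed[of 1 2 u] closed[of 0 2 u] that by simp_all
  have x: "v p q r \<in> S" using xS unfolding v_def .
  have "v q p r \<in> S" "v p r q \<in> S" "v r q p \<in> S"
    using closed01[OF x] closed12[OF x] closed02[OF x] by (simp_all only: refl)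
  moreover from this have "v r p q \<in> S" "v q r p \<in> S"
    using closed01[of "v p r q"] closed12[of "v q p r"] by (simp_all only: refl)
  moreover have "v p q r + v r p q + v q r p = v q p r + v p r q + v r q p"
    unfolding v_def by (simp add: algebra_simps)
  moreover have "distinct [v p q r, v r p q, v q r p, v q p r, v p r q, v r q p]"
  proof -
    have "v a b c \<noteq> v a' b' c'" if "\<not> (a - a' = b - b' \<and> b - b' = c - c')" for a b c a' b' c'
      using A2_coordinates_eq[OF iso] that unfolding v_def by blast
    then show ?thesis using pqr by (simp; linarith)
  qed
  ultimately show ?thesis unfolding six_term_relation_def using x by blast
qed

text \<open>The orbit of a scaled vertex \<open>c e\<^sub>k\<close> consists of all \<open>c e\<^sub>i\<close>: root reflections
  permute the vertices, and \<open>s\<^bsub>e\<^sub>k - e\<^sub>i\<^esub>\<close> moves \<open>c e\<^sub>k\<close> to \<open>c e\<^sub>i\<close>.\<close>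

lemma orbit_of_vertex:
  assumes iso: "isometric_quotient_basis l e" and \<Phi>: "\<Phi> = A_roots l e"
    and S: "S = (\<lambda>w. w x) ` weyl_group \<Phi>" and x: "x = c *\<^sub>R e k" and k: "k \<le> l"
  shows "S = {c *\<^sub>R e i | i. i \<le> l}"
proof
  have "w x \<in> {c *\<^sub>R e i | i. i \<le> l}" if "w \<in> weyl_group \<Phi>" for w
    using that
  proof (induction rule: weyl_group.induct)
    case (weyl_step w \<gamma>)
    then obtain i where i: "i \<le> l" "w x = c *\<^sub>R e i" by blast
    obtain a b where ab: "a \<le> l" "b \<le> l" "a \<noteq> b" "\<gamma> = e a - e b"
      using weyl_step.hyps(2) unfolding \<Phi> A_roots_def by blast
    show ?case using iso_refl_vertex[OF iso ab(1-3) i(1)] ab i by auto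
  qed (use x k in auto)
  then show "S \<subseteq> {c *\<^sub>R e i | i. i \<le> l}" using S by blast
next
  show "{c *\<^sub>R e i | i. i \<le> l} \<subseteq> S"
  proof clarify
    fix i assume i: "i \<le> l"
    show "c *\<^sub>R e i \<in> S"
    proof (cases "i = k")
      case False
      have "e k - e i \<in> \<Phi>" unfolding \<Phi> A_roots_def using i k False by auto
      then have "refl_vec (e k - e i) x \<in> S" by (rule orbit_refl_closed[OF S _ orbit_base_point[OF S]])
      then show ?thesis using iso_refl_vertex[OF iso k i False[symmetric] k] x by simp
    qed (use orbit_base_point[OF S] x in simp)
  qed
qed

text \<open>Either the coordinates of the base point are
  constant away from one index \<open>k\<close>, so the point is a nonzero multiple of \<open>e\<^sub>k\<close>
  (since \<open>\<Sum>e\<^sub>i = 0\<close>), or \<open>\<ell> = 2\<close> with three distinct coordinates, which is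
  excluded by hypothesis (c).\<close>

lemma orbit_is_scaled_vertices:
  fixes \<Phi> S :: "'a::euclidean_space set"
  assumes root: "root_system \<Phi>" and nontriv: "\<Phi> \<noteq> {}"
    and S: "S = (\<lambda>w. w x) ` weyl_group \<Phi>" and gen: "span S = UNIV" and n4: "no_four_relation S"
    and iso: "isometric_quotient_basis l e" and \<Phi>: "\<Phi> = A_roots l e"
    and no6: "l \<noteq> 2 \<or> \<not> six_term_relation S"
  shows "\<exists>c. c \<noteq> 0 \<and> S = {c *\<^sub>R e i | i. i \<le> l}"
proof -
  have xS: "x \<in> S" by (rule orbit_base_point[OF S])
  have closed: "\<forall>\<gamma>\<in>\<Phi>. \<forall>\<nu>\<in>S. refl_vec \<gamma> \<nu> \<in> S" using orbit_refl_closed[OF S] by blast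
  have "x \<noteq> 0" using orbit_point_positive_root[OF root nontriv S gen] by auto
  obtain \<xi> where x: "x = (\<Sum>i\<le>l. \<xi> i *\<^sub>R e i)" using iso_coordinates[OF iso] by blast
  consider (vertex) k t where "k \<le> l" "\<forall>j\<le>l. j \<noteq> k \<longrightarrow> \<xi> j = t"
    | (A2) "l = 2" "distinct [\<xi> 0, \<xi> 1, \<xi> 2]"
    using orbit_coordinates_pattern[OF root n4 closed xS iso \<Phi> x] by blast
  then show ?thesis
  proof cases
    case vertex
    have "x = (\<Sum>i\<le>l. t *\<^sub>R e i + (if i = k then (\<xi> k - t) *\<^sub>R e i else 0))"
      unfolding x using vertex by (intro sum.cong refl) (auto simp: algebra_simps)
    also have "\<dots> = t *\<^sub>R (\<Sum>i\<le>l. e i) + (\<xi> k - t) *\<^sub>R e k"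
      using vertex(1) by (simp add: sum.distrib scaleR_sum_right)
    finally have "x = (\<xi> k - t) *\<^sub>R e k" using iso_sum_zero[OF iso] by simp
    moreover from this have "\<xi> k - t \<noteq> 0" using \<open>x \<noteq> 0\<close> by auto
    ultimately show ?thesis using orbit_of_vertex[OF iso \<Phi> S _ vertex(1)] by blast
  next
    case A2
    have "x = \<xi> 0 *\<^sub>R e 0 + \<xi> 1 *\<^sub>R e 1 + \<xi> 2 *\<^sub>R e 2" unfolding x A2(1) sum_atMost_2 ..
    moreover have "refl_vec (e a - e b) u \<in> S" if "a \<le> 2" "b \<le> 2" "a \<noteq> b" "u \<in> S" for a b u
      using closed that unfolding \<Phi> A_roots_def A2(1) by blast
    ultimately have "six_term_relation S"
      using A2_six_term_relation[of e S] iso A2 xS by auto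
    then show ?thesis using no6 A2(1) by blast
  qed
qed

theorem mainTheorem4:
  fixes \<Phi> S :: "'a::euclidean_space set"
  assumes root: "root_system \<Phi>"
    and nontriv: "\<Phi> \<noteq> {}"
    and orbit: "weyl_orbit \<Phi> S"
    and gen: "span S = UNIV"
    and no4: "\<not> (\<exists>l1\<in>S. \<exists>l2\<in>S. \<exists>l3\<in>S. \<exists>l4\<in>S.
                  distinct [l1, l2, l3, l4] \<and> l1 + l2 = l3 + l4)"
  shows "(\<exists>l\<ge>1. type_A l \<Phi>) \<and>
         (\<forall>l e. l \<ge> 1 \<and> isometric_quotient_basis l e \<and> \<Phi> = A_roots l e \<and>
                (l \<noteq> 2 \<or>
                 \<not> (\<exists>l1\<in>S. \<exists>l2\<in>S. \<exists>l3\<in>S. \<exists>l4\<in>S. \<exists>l5\<in>S. \<exists>l6\<in>S.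
                      distinct [l1, l2, l3, l4, l5, l6] \<and> l1 + l2 + l3 = l4 + l5 + l6))
           \<longrightarrow> (\<exists>c::real. c \<noteq> 0 \<and> S = {c *\<^sub>R e i | i. i \<le> l}))"
proof -
  obtain x where S: "S = (\<lambda>w. w x) ` weyl_group \<Phi>" using orbit unfolding weyl_orbit_def by blast
  have n4: "no_four_relation S" using no4 unfolding no_four_relation_def .
  show ?thesis
    using exists_type_A[OF root nontriv S gen n4] orbit_is_scaled_vertices[OF root nontriv S gen n4]
    unfolding six_term_relation_def by blast
qed
end
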